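(* Let integers $n \geq 0$, $m \geq 2$, $k \geq 1$ and $1 \leq r < m$ be given, and let $p=(p_1,\dots,p_m)$ be a probability distribution on $\{1,\dots,m\}$ with $p_1+\dots+p_r < 1$. Throw $n$ balls independently into $m$ bins, each ball landing in bin $i$ with probability $p_i$, and let $M^{(r)}_n$ be the maximum load among bins $1,\dots,r$. Let $\|p\|_{k,r} = \left(\sum_{i=1}^r p_i^k\right)^{1/k}$. Then \[ \Pr[\mathrm{Bin}(n, \|p\|_{k,r}) \geq k] \;\leq\; \Pr[M^{(r)}_n \geq k] \;\leq\; \binom{n}{k}\|p\|_{k,r}^{k}. \]
   Context: $\mathrm{Bin}(n,\alpha)$ denotes a binomial random variable with $n$ trials and success probability $\alpha$. The load of a bin is the number of balls that landed in it. *)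

theory Defs
  imports "HOL-Probability.Probability"
begin

text \<open>Balls are indexed by 0..<n; an outcome is a function assigning each ball its bin.
  The n balls are thrown independently, each according to the bin distribution P.\<close>

definition balls_in_bins :: "nat \<Rightarrow> nat pmf \<Rightarrow> (nat \<Rightarrow> nat) pmf" where
  "balls_in_bins n P = Pi_pmf {..<n} 0 (\<lambda>_. P)"

definition load :: "nat \<Rightarrow> (nat \<Rightarrow> nat) \<Rightarrow> nat \<Rightarrow> nat" where
  "load n \<omega> i = card {j \<in> {..<n}. \<omega> j = i}"

definition max_load_r :: "nat \<Rightarrow> nat \<Rightarrow> (nat \<Rightarrow> nat) \<Rightarrow> nat" where
  "max_load_r n r \<omega> = Max (load n \<omega> ` {1..r})"

definition knorm_r :: "nat pmf \<Rightarrow> nat \<Rightarrow> nat \<Rightarrow> real" where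
  "knorm_r P k r = (\<Sum>i=1..r. pmf P i ^ k) powr (1 / real k)"

end

theory Submission
  imports Defs
begin

text \<open>
  Let L be the probability that each of the bins 1..r receives fewer than k balls. As a function
  of the bin probabilities it is a polynomial in which the bins outside 1..r enter only through
  their total mass. Replacing two bins of probabilities a and b by a single bin of probability
  c = (a^k + b^k)^(1/k), the mass a + b - c being moved outside, can only increase L: conditioned
  on the number m of balls that fall into the two bins, this is the subadditivity
  G c \<le> G a + G b of the binomial upper tail G x = (\<Sum>j\<ge>k. C(m,j) x^j (a + b - x)^(m-j)),
  which holds because G x = H (x^k) with H concave and H 0 = 0. Merging the bins 1..r one at a
  time turns L into P[Bin(n, ||p||_{k,r}) < k], which is the lower bound. The upper bound is the
  union bound over the r bins together with P[Bin(n, q) \<ge> k] \<le> C(n,k) q^k.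
\<close>

section \<open>Throwing one more ball\<close>

lemma measure_bind_pmf:
  "measure_pmf.prob (bind_pmf M f) X = measure_pmf.expectation M (\<lambda>x. measure_pmf.prob (f x) X)"
  unfolding measure_pmf_bind
  by (subst measure_pmf.measure_bind[where N="count_space UNIV"])
     (auto simp: space_subprob_algebra measure_pmf_in_subprob_algebra
           intro: prob_space_imp_subprob_space measure_pmf.prob_space_axioms)

lemma expectation_if_mem_finite:
  fixes g :: "'a \<Rightarrow> real"
  assumes "finite A"
  shows "measure_pmf.expectation P (\<lambda>y. if y \<in> A then g y else c)
         = (\<Sum>y\<in>A. pmf P y * g y) + (1 - (\<Sum>y\<in>A. pmf P y)) * c"
proof -
  have int: "integrable (measure_pmf P) (indicator B :: 'a \<Rightarrow> real)" for B
    by (rule measure_pmf.integrable_const_bound[where B=1]) (auto simp: indicator_def)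
  have "(\<lambda>y. if y \<in> A then g y else c) = (\<lambda>y. (\<Sum>x\<in>A. g x * indicator {x} y) + c * indicator (- A) y)"
    using assms by (auto simp: indicator_def fun_eq_iff if_distrib[where f="\<lambda>b. _ * b"] sum.delta)
  then have "measure_pmf.expectation P (\<lambda>y. if y \<in> A then g y else c)
      = (\<Sum>x\<in>A. g x * measure_pmf.prob P {x}) + c * measure_pmf.prob P (- A)"
    by (simp add: int Bochner_Integration.integral_sum Bochner_Integration.integrable_sum)
  moreover have "measure_pmf.prob P (- A) = 1 - (\<Sum>y\<in>A. pmf P y)"
    using assms measure_pmf.prob_compl[of A P]
    by (simp add: Compl_eq_Diff_UNIV measure_measure_pmf_finite)
  ultimately show ?thesis
    by (simp add: measure_pmf_single mult.commute)
qed

lemma balls_in_bins_Suc: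
  "balls_in_bins (Suc n) P = bind_pmf P (\<lambda>y. map_pmf (\<lambda>f. f(n := y)) (balls_in_bins n P))"
  unfolding balls_in_bins_def lessThan_Suc
  by (subst Pi_pmf_insert) (auto simp: map_pmf_def pair_pmf_def bind_assoc_pmf bind_return_pmf)

lemma load_fun_upd: "load (Suc n) (f(n := y)) = (load n f)(y := Suc (load n f y))"
proof
  fix i
  have "{j \<in> {..<Suc n}. (f(n := y)) j = i} = {j \<in> {..<n}. f j = i} \<union> (if y = i then {n} else {})"
    by (auto simp: less_Suc_eq)
  then show "load (Suc n) (f(n := y)) i = ((load n f)(y := Suc (load n f y))) i"
    unfolding load_def by (auto simp: card_insert_if)
qed

lemma prob_balls_in_bins_Suc:
  "measure_pmf.prob (balls_in_bins (Suc n) P) {f. Q (load (Suc n) f)}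
   = measure_pmf.expectation P
       (\<lambda>y. measure_pmf.prob (balls_in_bins n P) {f. Q ((load n f)(y := Suc (load n f y)))})"
  unfolding balls_in_bins_Suc measure_bind_pmf by (simp add: load_fun_upd vimage_def)

lemma prob_load_ge_le:
  "measure_pmf.prob (balls_in_bins n P) {\<omega>. k \<le> load n \<omega> i} \<le> real (n choose k) * pmf P i ^ k"
proof (induction n arbitrary: k)
  case 0
  then show ?case by (cases k) (simp_all add: load_def)
next
  case (Suc n)
  define g where "g k = measure_pmf.prob (balls_in_bins n P) {\<omega>. k \<le> load n \<omega> i}" for k
  show ?case
  proof (cases k)
    case 0
    then show ?thesis by (simp add: measure_pmf.prob_le_1)
  next
    case (Suc k')
    have "measure_pmf.prob (balls_in_bins (Suc n) P) {\<omega>. k \<le> load (Suc n) \<omega> i}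
        = measure_pmf.expectation P (\<lambda>y. measure_pmf.prob (balls_in_bins n P)
            {\<omega>. k \<le> ((load n \<omega>)(y := Suc (load n \<omega> y))) i})"
      by (rule prob_balls_in_bins_Suc)
    also have "\<dots> = measure_pmf.expectation P (\<lambda>y. if y \<in> {i} then g k' else g k)"
      by (intro Bochner_Integration.integral_cong refl) (auto simp: g_def Suc)
    also have "\<dots> = pmf P i * g k' + (1 - pmf P i) * g k"
      by (subst expectation_if_mem_finite) simp_all
    also have "\<dots> \<le> pmf P i * g k' + g k"
      by (simp add: g_def algebra_simps)
    also have "\<dots> \<le> pmf P i * (real (n choose k') * pmf P i ^ k') + real (n choose k) * pmf P i ^ k"
      unfolding g_def by (intro add_mono mult_left_mono Suc.IH) simp_all
    also have "\<dots> = real (Suc n choose k) * pmf P i ^ k"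
      by (simp add: Suc algebra_simps)
    finally show ?thesis .
  qed
qed

section \<open>All loads below their caps\<close>

text \<open>
  \<open>capped_mass n t p \<kappa> r\<close> is the total weight of the assignments of n balls in which
  every bin i \<in> {1..r} receives fewer than \<kappa> i balls, bin i having weight p i and all other bins
  together weight t - (p 1 + ... + p r); the recursion chooses the balls of bin r.
\<close>

fun capped_mass :: "nat \<Rightarrow> real \<Rightarrow> (nat \<Rightarrow> real) \<Rightarrow> (nat \<Rightarrow> nat) \<Rightarrow> nat \<Rightarrow> real" where
  "capped_mass n t p \<kappa> 0 = t ^ n"
| "capped_mass n t p \<kappa> (Suc r) =
     (\<Sum>j<\<kappa> (Suc r). real (n choose j) * p (Suc r) ^ j * capped_mass (n - j) (t - p (Suc r)) p \<kappa> r)"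

lemma capped_mass_cong:
  "(\<And>i. i \<in> {1..r} \<Longrightarrow> \<kappa> i = \<kappa>' i) \<Longrightarrow> capped_mass n t p \<kappa> r = capped_mass n t p \<kappa>' r"
  by (induction r arbitrary: n t) auto

lemma capped_mass_no_balls:
  "capped_mass 0 t p \<kappa> r = (if \<forall>i\<in>{1..r}. 0 < \<kappa> i then 1 else 0)"
proof (induction r arbitrary: t)
  case (Suc r)
  have "capped_mass 0 t p \<kappa> (Suc r) = (if 0 < \<kappa> (Suc r) then capped_mass 0 (t - p (Suc r)) p \<kappa> r else 0)"
    by (cases "\<kappa> (Suc r)") (simp_all add: lessThan_Suc_eq_insert_0 sum.reindex)
  then show ?case
    using Suc.IH by (auto simp: le_Suc_eq intro!: bexI[of _ "Suc r"])
qed simp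

lemma sum_choose_Suc_pascal:
  fixes x :: real
  shows "(\<Sum>j<Suc K. real (Suc n choose j) * x ^ j * g (Suc n - j))
       = (\<Sum>j<Suc K. real (n choose j) * x ^ j * g (Suc n - j)) + x * (\<Sum>j<K. real (n choose j) * x ^ j * g (n - j))"
  unfolding sum.lessThan_Suc_shift by (simp add: sum.distrib algebra_simps sum_distrib_left)

lemma capped_mass_Suc_last_bin:
  "capped_mass (Suc n) t p \<kappa> (Suc r)
   = (\<Sum>j<\<kappa> (Suc r). real (n choose j) * p (Suc r) ^ j * capped_mass (Suc n - j) (t - p (Suc r)) p \<kappa> r)
     + p (Suc r) * capped_mass n t p (\<kappa>(Suc r := \<kappa> (Suc r) - 1)) (Suc r)"
proof (cases "\<kappa> (Suc r)")
  case (Suc K)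
  have "capped_mass m (t - p (Suc r)) p (\<kappa>(Suc r := K)) r = capped_mass m (t - p (Suc r)) p \<kappa> r" for m
    by (rule capped_mass_cong) auto
  then show ?thesis
    using Suc sum_choose_Suc_pascal[where g="\<lambda>m. capped_mass m (t - p (Suc r)) p \<kappa> r" and K=K]
    by (simp del: sum.lessThan_Suc)
qed simp

lemma capped_mass_Suc:
  "capped_mass (Suc n) t p \<kappa> r
   = (\<Sum>i=1..r. p i * capped_mass n t p (\<kappa>(i := \<kappa> i - 1)) r)
     + (t - (\<Sum>i=1..r. p i)) * capped_mass n t p \<kappa> r"
proof (induction r arbitrary: n t \<kappa>)
  case (Suc r)
  define x where "x = p (Suc r)"
  define S where "S = (\<Sum>i=1..r. p i)"
  define F where "F m \<kappa>' = capped_mass m (t - x) p \<kappa>' r" for m \<kappa>'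
  have IH: "F (Suc m) \<kappa>' = (\<Sum>i=1..r. p i * F m (\<kappa>'(i := \<kappa>' i - 1))) + (t - x - S) * F m \<kappa>'" for m \<kappa>'
    unfolding F_def S_def by (rule Suc.IH)
  have F_Suc: "real (n choose j) * x ^ j * F (Suc n - j) \<kappa>
      = (\<Sum>i=1..r. p i * (real (n choose j) * x ^ j * F (n - j) (\<kappa>(i := \<kappa> i - 1))))
        + (t - x - S) * (real (n choose j) * x ^ j * F (n - j) \<kappa>)" for j
  proof (cases "j \<le> n")
    case True
    then have "Suc n - j = Suc (n - j)" by simp
    then show ?thesis
      by (simp add: IH algebra_simps sum_distrib_left sum_distrib_right)
  qed (simp add: binomial_eq_0)
  have "(\<Sum>j<\<kappa> (Suc r). real (n choose j) * x ^ j * F (Suc n - j) \<kappa>)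
      = (\<Sum>i=1..r. p i * (\<Sum>j<\<kappa> (Suc r). real (n choose j) * x ^ j * F (n - j) (\<kappa>(i := \<kappa> i - 1))))
        + (t - x - S) * (\<Sum>j<\<kappa> (Suc r). real (n choose j) * x ^ j * F (n - j) \<kappa>)"
    by (simp add: F_Suc sum.distrib sum_distrib_left) (rule sum.swap)
  also have "\<dots> = (\<Sum>i=1..r. p i * capped_mass n t p (\<kappa>(i := \<kappa> i - 1)) (Suc r))
        + (t - x - S) * capped_mass n t p \<kappa> (Suc r)"
    by (intro arg_cong2[where f="(+)"] sum.cong refl) (auto simp: F_def x_def)
  finally have "capped_mass (Suc n) t p \<kappa> (Suc r)
      = (\<Sum>i=1..r. p i * capped_mass n t p (\<kappa>(i := \<kappa> i - 1)) (Suc r))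
        + (t - x - S) * capped_mass n t p \<kappa> (Suc r)
        + x * capped_mass n t p (\<kappa>(Suc r := \<kappa> (Suc r) - 1)) (Suc r)"
    unfolding capped_mass_Suc_last_bin F_def x_def by simp
  moreover have "(\<Sum>i=1..Suc r. f i) = (\<Sum>i=1..r. f i) + f (Suc r)" for f :: "nat \<Rightarrow> real"
    by simp
  ultimately show ?case
    unfolding S_def x_def by (simp only: algebra_simps)
qed simp

lemma prob_loads_below:
  "measure_pmf.prob (balls_in_bins n P) {\<omega>. \<forall>i\<in>{1..r}. load n \<omega> i < \<kappa> i} = capped_mass n 1 (pmf P) \<kappa> r"
proof (induction n arbitrary: \<kappa>)
  case 0
  then show ?case by (simp add: load_def capped_mass_no_balls)
next
  case (Suc n)
  have shift: "(\<forall>i\<in>{1..r}. (L(y := Suc (L y))) i < \<kappa> i)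
      \<longleftrightarrow> (if y \<in> {1..r} then \<forall>i\<in>{1..r}. L i < (\<kappa>(y := \<kappa> y - 1)) i
          else \<forall>i\<in>{1..r}. L i < \<kappa> i)"
    for L :: "nat \<Rightarrow> nat" and y
    by (cases "y \<in> {1..r}") (auto intro!: ball_cong)
  have "measure_pmf.prob (balls_in_bins (Suc n) P) {\<omega>. \<forall>i\<in>{1..r}. load (Suc n) \<omega> i < \<kappa> i}
      = measure_pmf.expectation P (\<lambda>y. measure_pmf.prob (balls_in_bins n P)
          {\<omega>. \<forall>i\<in>{1..r}. ((load n \<omega>)(y := Suc (load n \<omega> y))) i < \<kappa> i})"
    by (rule prob_balls_in_bins_Suc)
  also have "\<dots> = measure_pmf.expectation P (\<lambda>y.
      if y \<in> {1..r} then capped_mass n 1 (pmf P) (\<kappa>(y := \<kappa> y - 1)) r else capped_mass n 1 (pmf P) \<kappa> r)"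
  proof (intro Bochner_Integration.integral_cong refl)
    fix y
    show "measure_pmf.prob (balls_in_bins n P)
          {\<omega>. \<forall>i\<in>{1..r}. ((load n \<omega>)(y := Suc (load n \<omega> y))) i < \<kappa> i}
        = (if y \<in> {1..r} then capped_mass n 1 (pmf P) (\<kappa>(y := \<kappa> y - 1)) r
           else capped_mass n 1 (pmf P) \<kappa> r)"
      by (cases "y \<in> {1..r}") (simp_all only: shift if_True if_False Suc.IH)
  qed
  also have "\<dots> = capped_mass (Suc n) 1 (pmf P) \<kappa> r"
    by (subst expectation_if_mem_finite) (simp_all add: capped_mass_Suc)
  finally show ?case .
qed

section \<open>Homogeneous binomial tails\<close>

text \<open>
  For 0 \<le> x \<le> s these are s^m times P[Bin(m, x/s) \<ge> k] and P[Bin(m, x/s) < k]; keeping the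
  total weight s as a parameter lets the mass of the remaining bins be carried along.
\<close>

definition binomial_upper_tail :: "nat \<Rightarrow> real \<Rightarrow> nat \<Rightarrow> real \<Rightarrow> real" where
  "binomial_upper_tail m s k x = (\<Sum>j=k..m. real (m choose j) * x ^ j * (s - x) ^ (m - j))"

definition binomial_lower_tail :: "nat \<Rightarrow> real \<Rightarrow> nat \<Rightarrow> real \<Rightarrow> real" where
  "binomial_lower_tail m s k x = (\<Sum>j<k. real (m choose j) * x ^ j * (s - x) ^ (m - j))"

lemma sum_lessThan_choose:
  fixes f :: "nat \<Rightarrow> real"
  shows "(\<Sum>j<k. real (n choose j) * f j) = (\<Sum>j\<le>n. real (n choose j) * (if j < k then f j else 0))"
proof -
  have "(\<Sum>j<k. real (n choose j) * f j) = (\<Sum>j\<in>{..<k} \<inter> {..n}. real (n choose j) * f j)"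
    by (rule sum.mono_neutral_right) auto
  also have "\<dots> = (\<Sum>j\<le>n. real (n choose j) * (if j < k then f j else 0))"
    by (simp add: if_distrib sum.If_cases Int_commute lessThan_def)
  finally show ?thesis .
qed

lemma binomial_lower_tail_eq:
  "binomial_lower_tail m s k x = s ^ m - binomial_upper_tail m s k x"
proof -
  define T where "T j = real (m choose j) * x ^ j * (s - x) ^ (m - j)" for j
  have "s ^ m = (\<Sum>j\<le>m. T j)"
    using binomial_ring[of x "s - x" m] by (simp add: T_def mult_ac)
  also have "\<dots> = (\<Sum>j\<in>{..m} \<inter> {..<k}. T j) + (\<Sum>j\<in>{..m} - {..<k}. T j)"
    by (simp add: sum.Int_Diff)
  also have "(\<Sum>j\<in>{..m} \<inter> {..<k}. T j) = binomial_lower_tail m s k x"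
    unfolding binomial_lower_tail_def T_def[symmetric] by (rule sum.mono_neutral_left) (auto simp: T_def)
  also have "{..m} - {..<k} = {k..m}"
    by auto
  finally show ?thesis
    by (simp add: binomial_upper_tail_def T_def)
qed

lemma binomial_upper_tail_eq_sum_if:
  "binomial_upper_tail m s k x = (\<Sum>j\<le>m. if k \<le> j then real (m choose j) * x ^ j * (s - x) ^ (m - j) else 0)"
proof -
  have "{k..m} = {j\<in>{..m}. k \<le> j}"
    by auto
  then show ?thesis
    unfolding binomial_upper_tail_def by (simp only: sum.inter_filter finite_atMost)
qed

lemma binomial_upper_tail_at_0: "1 \<le> k \<Longrightarrow> binomial_upper_tail m s k 0 = 0"
  unfolding binomial_upper_tail_def by (intro sum.neutral) auto

lemma binomial_lower_tail_at_0: "1 \<le> k \<Longrightarrow> binomial_lower_tail n t k 0 = t ^ n"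
  unfolding binomial_lower_tail_def by (cases k) (simp_all add: sum.lessThan_Suc_shift del: sum.lessThan_Suc)

lemma binomial_upper_tail_deriv:
  assumes "1 \<le> k" "k \<le> m"
  shows "(binomial_upper_tail m s k has_real_derivative
           real m * real ((m - 1) choose (k - 1)) * x ^ (k - 1) * (s - x) ^ (m - k)) (at x)"
  using assms(2)
proof (induction k rule: inc_induct)
  case base
  have "binomial_upper_tail m s m = (\<lambda>x. x ^ m)"
    by (auto simp: binomial_upper_tail_def fun_eq_iff)
  then show ?case
    by (auto intro!: derivative_eq_intros)
next
  case (step k)
  obtain a where a: "k = Suc a" using assms(1) step.hyps by (cases k) auto
  obtain b where b: "m - k = Suc b" using step.hyps by (metis Suc_diff_Suc)
  have split: "binomial_upper_tail m s k
      = (\<lambda>x. real (m choose k) * x ^ k * (s - x) ^ (m - k) + binomial_upper_tail m s (Suc k) x)"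
    using step.hyps by (auto simp: binomial_upper_tail_def fun_eq_iff sum.atLeast_Suc_atMost)
  have absorb_k: "real (m choose k) * real k = real m * real ((m - 1) choose (k - 1))"
    using binomial_absorption[of a m] a by (metis diff_Suc_1 mult.commute of_nat_mult)
  have absorb_mk: "real (m choose k) * real (m - k) = real m * real ((m - 1) choose k)"
    using binomial_absorb_comp[of m k] by (simp add: mult.commute flip: of_nat_mult)
  have "((\<lambda>x. real (m choose k) * x ^ k * (s - x) ^ (m - k)) has_real_derivative
      real (m choose k) * (real k * x ^ (k - 1) * (s - x) ^ (m - k) - x ^ k * (real (m - k) * (s - x) ^ (m - k - 1)))) (at x)"
    by (rule derivative_eq_intros refl | simp)+ (simp add: algebra_simps)
  then have "((\<lambda>x. real (m choose k) * x ^ k * (s - x) ^ (m - k)) has_real_derivative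
      real (m choose k) * real k * x ^ (k - 1) * (s - x) ^ (m - k)
      - real (m choose k) * real (m - k) * x ^ k * (s - x) ^ (m - Suc k)) (at x)"
    by (simp add: algebra_simps)
  from DERIV_add[OF this step.IH] show ?case
    unfolding split absorb_k absorb_mk by simp
qed

lemma add_power_le_power_add:
  fixes a b :: real
  assumes "0 \<le> a" "0 \<le> b" "1 \<le> k"
  shows "a ^ k + b ^ k \<le> (a + b) ^ k"
  using assms(3)
proof (induction k rule: dec_induct)
  case (step k)
  have "a ^ Suc k + b ^ Suc k \<le> (a + b) * (a ^ k + b ^ k)"
    using assms by (simp add: algebra_simps)
  also have "\<dots> \<le> (a + b) * (a + b) ^ k"
    using step assms by (intro mult_left_mono) auto
  finally show ?case by simp
qed simp

lemma sum_power_le_power_sum: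
  fixes f :: "'a \<Rightarrow> real"
  assumes "\<And>i. i \<in> A \<Longrightarrow> 0 \<le> f i" "1 \<le> k"
  shows "(\<Sum>i\<in>A. f i ^ k) \<le> (\<Sum>i\<in>A. f i) ^ k"
  using assms(1)
proof (induction A rule: infinite_finite_induct)
  case (insert x A)
  have "(\<Sum>i\<in>insert x A. f i ^ k) \<le> f x ^ k + (\<Sum>i\<in>A. f i) ^ k"
    using insert by simp
  also have "\<dots> \<le> (f x + (\<Sum>i\<in>A. f i)) ^ k"
    using insert assms(2) by (intro add_power_le_power_add sum_nonneg) auto
  finally show ?case
    using insert by simp
qed (use assms(2) in auto)

lemma root_sum_power_le_sum:
  fixes f :: "'a \<Rightarrow> real"
  assumes "\<And>i. i \<in> A \<Longrightarrow> 0 \<le> f i" "1 \<le> k"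
  shows "root k (\<Sum>i\<in>A. f i ^ k) \<le> (\<Sum>i\<in>A. f i)"
proof -
  have "root k (\<Sum>i\<in>A. f i ^ k) \<le> root k ((\<Sum>i\<in>A. f i) ^ k)"
    using assms sum_power_le_power_sum[of A f k] by simp
  also have "\<dots> = (\<Sum>i\<in>A. f i)"
    using assms by (intro real_root_power_cancel sum_nonneg) auto
  finally show ?thesis .
qed

lemma DERIV_root_add_power:
  fixes a y :: real
  assumes "0 < a" "0 \<le> y" "1 \<le> k"
  shows "((\<lambda>y. root k (a ^ k + y ^ k)) has_real_derivative y ^ (k - 1) / root k (a ^ k + y ^ k) ^ (k - 1)) (at y)"
proof -
  have pos: "0 < a ^ k + y ^ k"
    using assms by (simp add: add_pos_nonneg)
  have "((\<lambda>y. root k (a ^ k + y ^ k)) has_real_derivative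
      inverse (real k * root k (a ^ k + y ^ k) ^ (k - Suc 0)) * (real k * y ^ (k - 1))) (at y)"
    using assms pos by (intro DERIV_chain2[OF DERIV_real_root] derivative_eq_intros refl) auto
  then show ?thesis
    using assms by (simp add: field_simps)
qed

lemma root_add_power_bounds:
  fixes a y :: real
  assumes "0 \<le> a" "0 \<le> y" "1 \<le> k"
  shows "y \<le> root k (a ^ k + y ^ k)" "root k (a ^ k + y ^ k) \<le> a + y"
proof -
  have "root k (y ^ k) \<le> root k (a ^ k + y ^ k)" "root k (a ^ k + y ^ k) \<le> root k ((a + y) ^ k)"
    using assms add_power_le_power_add[of a y k] by auto
  then show "y \<le> root k (a ^ k + y ^ k)" "root k (a ^ k + y ^ k) \<le> a + y"
    using assms by (simp_all add: real_root_power_cancel)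
qed

text \<open>
  With C y = (a^k + y^k)^(1/k) one has C' y * (C y)^(k-1) = y^(k-1) and s - C y \<le> s - y, so
  \<psi> y = G a + G y - G (C y) is nondecreasing; compare \<psi> 0 = 0 with \<psi> b.
\<close>

lemma binomial_upper_tail_root_add_power_le:
  assumes "1 \<le> k" "k \<le> m" "0 < a" "0 \<le> b" "a + b \<le> s"
  shows "binomial_upper_tail m s k (root k (a ^ k + b ^ k))
         \<le> binomial_upper_tail m s k a + binomial_upper_tail m s k b"
proof -
  define C where "C y = root k (a ^ k + y ^ k)" for y
  define K where "K = real m * real ((m - 1) choose (k - 1))"
  define G where "G = binomial_upper_tail m s k"
  define \<psi> where "\<psi> y = G a + G y - G (C y)" for y
  have "\<psi> 0 \<le> \<psi> b"
  proof (rule DERIV_nonneg_imp_nondecreasing[OF assms(4)])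
    fix y assume y: "0 \<le> y" "y \<le> b"
    have C_pos: "0 < C y"
      using assms y(1) by (simp add: C_def add_pos_nonneg)
    have "(\<psi> has_real_derivative 0 + K * y ^ (k - 1) * (s - y) ^ (m - k)
        - K * C y ^ (k - 1) * (s - C y) ^ (m - k) * (y ^ (k - 1) / C y ^ (k - 1))) (at y)"
      unfolding \<psi>_def[abs_def] G_def K_def
      by (intro DERIV_diff DERIV_add DERIV_const binomial_upper_tail_deriv assms(1,2)
            DERIV_chain2[OF binomial_upper_tail_deriv DERIV_root_add_power[OF assms(3) y(1) assms(1)],
              folded C_def])
    moreover have "(s - C y) ^ (m - k) \<le> (s - y) ^ (m - k)"
      using root_add_power_bounds[of a y k] y assms by (intro power_mono) (auto simp: C_def)
    then have "0 \<le> K * y ^ (k - 1) * ((s - y) ^ (m - k) - (s - C y) ^ (m - k))"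
      using y by (intro mult_nonneg_nonneg) (auto simp: K_def)
    then have "0 \<le> 0 + K * y ^ (k - 1) * (s - y) ^ (m - k)
        - K * C y ^ (k - 1) * (s - C y) ^ (m - k) * (y ^ (k - 1) / C y ^ (k - 1))"
      using C_pos by (simp add: algebra_simps)
    ultimately show "\<exists>d. (\<psi> has_real_derivative d) (at y) \<and> 0 \<le> d"
      by blast
  qed
  moreover have "C 0 = a"
    using assms by (simp add: C_def real_root_power_cancel power_0_left)
  ultimately show ?thesis
    using assms(1) by (simp add: \<psi>_def G_def C_def binomial_upper_tail_at_0)
qed

lemma binomial_upper_tail_subadditive:
  assumes "1 \<le> k" "0 \<le> a" "0 \<le> b" "a + b \<le> s" "0 \<le> c" "c ^ k = a ^ k + b ^ k"
  shows "binomial_upper_tail m s k c \<le> binomial_upper_tail m s k a + binomial_upper_tail m s k b"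
proof -
  consider "m < k" | "a = 0" | "k \<le> m" "0 < a"
    using assms by force
  then show ?thesis
  proof cases
    case 1
    then show ?thesis by (simp add: binomial_upper_tail_def)
  next
    case 2
    then have "c = b"
      using assms by (auto intro: power_eq_imp_eq_base[of c k b])
    then show ?thesis
      using 2 assms(1) by (simp add: binomial_upper_tail_at_0)
  next
    case 3
    then have "c = root k (a ^ k + b ^ k)"
      using assms by (simp add: real_root_pos_unique)
    then show ?thesis
      using 3 assms by (simp add: binomial_upper_tail_root_add_power_le)
  qed
qed

section \<open>Merging two bins\<close>

text \<open>
  Unless m \<ge> 2k - 1, when
  the left side vanishes, both sides are (a + b)^m minus upper tails, and the claim is
  subadditivity.
\<close>

lemma two_bins_below_eq:
  fixes a b :: real
  assumes "m + 1 < 2 * k"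
  shows "(\<Sum>j\<le>m. real (m choose j) * (if j < k \<and> m - j < k then b ^ j * a ^ (m - j) else 0))
         = (a + b) ^ m - binomial_upper_tail m (a + b) k b - binomial_upper_tail m (a + b) k a"
proof -
  define f where "f j = real (m choose j) * b ^ j * a ^ (m - j)" for j
  have upper_b: "binomial_upper_tail m (a + b) k b = (\<Sum>j\<le>m. if k \<le> j then f j else 0)"
    unfolding binomial_upper_tail_eq_sum_if f_def by (intro sum.cong refl) simp
  have "binomial_upper_tail m (a + b) k a = (\<Sum>j\<le>m. if k \<le> j then f (m - j) else 0)"
    unfolding binomial_upper_tail_eq_sum_if f_def
    by (intro sum.cong refl) (simp add: binomial_symmetric[symmetric] mult_ac)
  also have "\<dots> = (\<Sum>j\<le>m. if k \<le> m - j then f j else 0)"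
    by (rule sum.reindex_bij_witness[where i="\<lambda>j. m - j" and j="\<lambda>j. m - j"]) auto
  finally have upper_a: "binomial_upper_tail m (a + b) k a = (\<Sum>j\<le>m. if k \<le> m - j then f j else 0)" .
  have "(a + b) ^ m = (\<Sum>j\<le>m. f j)"
    using binomial_ring[of b a m] by (simp add: f_def add.commute)
  also have "\<dots> = (\<Sum>j\<le>m. real (m choose j) * (if j < k \<and> m - j < k then b ^ j * a ^ (m - j) else 0))
      + (\<Sum>j\<le>m. if k \<le> j then f j else 0) + (\<Sum>j\<le>m. if k \<le> m - j then f j else 0)"
    using assms unfolding sum.distrib[symmetric] by (intro sum.cong refl) (auto simp: f_def)
  finally show ?thesis
    unfolding upper_a upper_b by simp
qed

lemma two_bins_below_le_merged:
  fixes a b c :: real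
  assumes "1 \<le> k" "0 \<le> a" "0 \<le> b" "0 \<le> c" "c ^ k = a ^ k + b ^ k"
  shows "(\<Sum>j\<le>m. real (m choose j) * (if j < k \<and> m - j < k then b ^ j * a ^ (m - j) else 0))
         \<le> binomial_lower_tail m (a + b) k c"
proof (cases "m + 1 < 2 * k")
  case True
  have "(a + b) ^ m - binomial_upper_tail m (a + b) k b - binomial_upper_tail m (a + b) k a
      \<le> (a + b) ^ m - binomial_upper_tail m (a + b) k c"
    using binomial_upper_tail_subadditive[of k a b "a + b" c m] assms by simp
  then show ?thesis
    by (simp add: two_bins_below_eq[OF True] binomial_lower_tail_eq)
next
  case False
  have "c ^ k \<le> (a + b) ^ k"
    using assms add_power_le_power_add[of a b k] by simp
  then have "c \<le> a + b"
    using assms power_mono_iff[of c "a + b" k] by simp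
  then have "0 \<le> binomial_lower_tail m (a + b) k c"
    unfolding binomial_lower_tail_def using assms by (intro sum_nonneg) auto
  moreover have "(\<Sum>j\<le>m. real (m choose j) * (if j < k \<and> m - j < k then b ^ j * a ^ (m - j) else 0)) = 0"
    using False by (intro sum.neutral) auto
  ultimately show ?thesis by simp
qed

lemma sum_trinomial_regroup:
  fixes X :: "nat \<Rightarrow> nat \<Rightarrow> real"
  shows "(\<Sum>j\<le>n. \<Sum>i\<le>n - j. real (n choose j) * real ((n - j) choose i) * X j i * d ^ (n - j - i))
       = (\<Sum>m\<le>n. real (n choose m) * d ^ (n - m) * (\<Sum>j\<le>m. real (m choose j) * X j (m - j)))"
proof -
  define g where "g j i = real (n choose j) * real ((n - j) choose i) * X j i * d ^ (n - j - i)" for j i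
  have "(\<Sum>j\<le>n. \<Sum>i\<le>n - j. g j i) = (\<Sum>(j, i)\<in>{(j, i). j + i \<le> n}. g j i)"
    by (simp add: sum.Sigma) (intro sum.cong; auto)
  also have "\<dots> = (\<Sum>m\<le>n. \<Sum>j\<le>m. g j (m - j))"
    by (rule sum.triangle_reindex_eq)
  also have "\<dots> = (\<Sum>m\<le>n. real (n choose m) * d ^ (n - m) * (\<Sum>j\<le>m. real (m choose j) * X j (m - j)))"
  proof (intro sum.cong refl)
    fix m assume m: "m \<in> {..n}"
    have "g j (m - j) = real (n choose m) * d ^ (n - m) * (real (m choose j) * X j (m - j))" if "j \<le> m" for j
    proof -
      have "g j (m - j) = (real (n choose j) * real ((n - j) choose (m - j))) * X j (m - j) * d ^ (n - j - (m - j))"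
        by (simp add: g_def)
      also have "real (n choose j) * real ((n - j) choose (m - j)) = real (n choose m) * real (m choose j)"
        using choose_mult[of j m n] that m by (simp flip: of_nat_mult)
      also have "n - j - (m - j) = n - m"
        using that m by simp
      finally show ?thesis
        by (simp only: mult_ac)
    qed
    then show "(\<Sum>j\<le>m. g j (m - j)) = real (n choose m) * d ^ (n - m) * (\<Sum>j\<le>m. real (m choose j) * X j (m - j))"
      by (simp add: sum_distrib_left)
  qed
  finally show ?thesis
    by (simp add: g_def)
qed

lemma binomial_lower_tail_split_off:
  "binomial_lower_tail n t k c = (\<Sum>m\<le>n. real (n choose m) * d ^ (n - m) * binomial_lower_tail m (t - d) k c)"
proof -
  define X where "X j i = (if j < k then c ^ j * (t - d - c) ^ i else 0)" for j i
  have "binomial_lower_tail n t k c = (\<Sum>j\<le>n. real (n choose j) * (if j < k then c ^ j * (t - c) ^ (n - j) else 0))"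
    unfolding binomial_lower_tail_def mult.assoc by (rule sum_lessThan_choose)
  also have "\<dots> = (\<Sum>j\<le>n. \<Sum>i\<le>n - j. real (n choose j) * real ((n - j) choose i) * X j i * d ^ (n - j - i))"
  proof (intro sum.cong refl)
    fix j
    have "(t - c) ^ (n - j) = (\<Sum>i\<le>n - j. real ((n - j) choose i) * (t - d - c) ^ i * d ^ (n - j - i))"
      using binomial_ring[of "t - d - c" d "n - j"] by (simp add: mult_ac)
    then show "real (n choose j) * (if j < k then c ^ j * (t - c) ^ (n - j) else 0)
        = (\<Sum>i\<le>n - j. real (n choose j) * real ((n - j) choose i) * X j i * d ^ (n - j - i))"
      by (simp add: X_def sum_distrib_left mult_ac)
  qed
  also have "\<dots> = (\<Sum>m\<le>n. real (n choose m) * d ^ (n - m) * (\<Sum>j\<le>m. real (m choose j) * X j (m - j)))"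
    by (rule sum_trinomial_regroup)
  also have "\<dots> = (\<Sum>m\<le>n. real (n choose m) * d ^ (n - m) * binomial_lower_tail m (t - d) k c)"
    unfolding binomial_lower_tail_def mult.assoc sum_lessThan_choose by (simp add: X_def)
  finally show ?thesis .
qed

text \<open>
  The left side is the weight of both bins, of weights b and a, receiving fewer than k of n balls,
  the other bins having total weight d = t - a - b. Grouping by the number of balls falling into
  the two bins reduces the claim to the previous inequality.
\<close>

lemma merge_two_bins:
  fixes a b c t :: real
  assumes "1 \<le> k" "0 \<le> a" "0 \<le> b" "0 \<le> c" "c ^ k = a ^ k + b ^ k" "a + b \<le> t"
  shows "(\<Sum>j<k. real (n choose j) * b ^ j * binomial_lower_tail (n - j) (t - b) k a) \<le> binomial_lower_tail n t k c"
proof -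
  define d where "d = t - b - a"
  define X where "X j i = (if j < k \<and> i < k then b ^ j * a ^ i else 0)" for j i
  have "(\<Sum>j<k. real (n choose j) * b ^ j * binomial_lower_tail (n - j) (t - b) k a)
      = (\<Sum>j\<le>n. real (n choose j) * (if j < k then b ^ j * binomial_lower_tail (n - j) (t - b) k a else 0))"
    unfolding mult.assoc by (rule sum_lessThan_choose)
  also have "\<dots> = (\<Sum>j\<le>n. \<Sum>i\<le>n - j. real (n choose j) * real ((n - j) choose i) * X j i * d ^ (n - j - i))"
  proof (intro sum.cong refl)
    fix j
    have "binomial_lower_tail (n - j) (t - b) k a
        = (\<Sum>i\<le>n - j. real ((n - j) choose i) * (if i < k then a ^ i * d ^ (n - j - i) else 0))"
      unfolding binomial_lower_tail_def mult.assoc sum_lessThan_choose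
      by (intro sum.cong refl) (simp add: d_def)
    then show "real (n choose j) * (if j < k then b ^ j * binomial_lower_tail (n - j) (t - b) k a else 0)
        = (\<Sum>i\<le>n - j. real (n choose j) * real ((n - j) choose i) * X j i * d ^ (n - j - i))"
      by (cases "j < k") (auto simp: X_def sum_distrib_left mult_ac intro!: sum.cong)
  qed
  also have "\<dots> = (\<Sum>m\<le>n. real (n choose m) * d ^ (n - m) * (\<Sum>j\<le>m. real (m choose j) * X j (m - j)))"
    by (rule sum_trinomial_regroup)
  also have "\<dots> \<le> (\<Sum>m\<le>n. real (n choose m) * d ^ (n - m) * binomial_lower_tail m (a + b) k c)"
    using assms two_bins_below_le_merged[OF assms(1-5)]
    by (intro sum_mono mult_left_mono) (auto simp: X_def d_def)
  also have "\<dots> = binomial_lower_tail n t k c"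
    using binomial_lower_tail_split_off[of n t k c d] by (simp add: d_def add.commute)
  finally show ?thesis .
qed

lemma capped_mass_le_binomial_lower_tail:
  assumes "1 \<le> k" "\<And>i. i \<in> {1..r} \<Longrightarrow> 0 \<le> p i" "(\<Sum>i=1..r. p i) \<le> t"
  shows "capped_mass n t p (\<lambda>_. k) r \<le> binomial_lower_tail n t k (root k (\<Sum>i=1..r. p i ^ k))"
  using assms(2,3)
proof (induction r arbitrary: n t)
  case 0
  then show ?case
    using assms(1) by (simp add: binomial_lower_tail_at_0)
next
  case (Suc r)
  define q where "q = root k (\<Sum>i=1..r. p i ^ k)"
  define Q where "Q = root k (\<Sum>i=1..Suc r. p i ^ k)"
  have nonneg: "0 \<le> p (Suc r)" "0 \<le> (\<Sum>i=1..r. p i ^ k)"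
    using Suc.prems(1) by (auto intro: sum_nonneg)
  have "q \<le> (\<Sum>i=1..r. p i)"
    unfolding q_def using assms(1) Suc.prems(1) by (intro root_sum_power_le_sum) auto
  moreover have "Q ^ k = q ^ k + p (Suc r) ^ k"
    using assms(1) nonneg by (simp add: Q_def q_def)
  ultimately have "(\<Sum>j<k. real (n choose j) * p (Suc r) ^ j * binomial_lower_tail (n - j) (t - p (Suc r)) k q)
      \<le> binomial_lower_tail n t k Q"
    using Suc.prems(2) assms(1) nonneg
    by (intro merge_two_bins) (auto simp: q_def Q_def)
  moreover have "capped_mass n t p (\<lambda>_. k) (Suc r)
      \<le> (\<Sum>j<k. real (n choose j) * p (Suc r) ^ j * binomial_lower_tail (n - j) (t - p (Suc r)) k q)"
    unfolding capped_mass.simps q_def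
    using Suc.prems nonneg by (intro sum_mono mult_left_mono Suc.IH) auto
  ultimately show ?case
    by (simp add: Q_def)
qed

section \<open>Maximum load\<close>

lemma knorm_r_eq_root: "1 \<le> k \<Longrightarrow> knorm_r P k r = root k (\<Sum>i=1..r. pmf P i ^ k)"
  by (simp add: knorm_r_def root_powr_inverse sum_nonneg)

lemma knorm_r_le_1:
  assumes "1 \<le> k"
  shows "knorm_r P k r \<le> 1"
proof -
  have "knorm_r P k r \<le> (\<Sum>i=1..r. pmf P i)"
    using assms by (simp add: knorm_r_eq_root root_sum_power_le_sum)
  also have "\<dots> = measure_pmf.prob P {1..r}"
    by (simp add: measure_measure_pmf_finite)
  finally show ?thesis
    using measure_pmf.prob_le_1 order_trans by blast
qed

lemma prob_binomial_pmf_atLeast: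
  assumes "0 \<le> q" "q \<le> 1"
  shows "measure_pmf.prob (binomial_pmf n q) {k..} = 1 - binomial_lower_tail n 1 k q"
proof -
  have "measure_pmf.prob (binomial_pmf n q) {k..} = 1 - measure_pmf.prob (binomial_pmf n q) {..<k}"
    using measure_pmf.prob_compl[of "{..<k}" "binomial_pmf n q"] by (simp add: Compl_eq_Diff_UNIV[symmetric] not_less)
  also have "measure_pmf.prob (binomial_pmf n q) {..<k} = binomial_lower_tail n 1 k q"
    using assms by (simp add: measure_measure_pmf_finite binomial_lower_tail_def)
  finally show ?thesis .
qed

lemma prob_max_load_r_atLeast:
  assumes "1 \<le> r"
  shows "measure_pmf.prob (balls_in_bins n P) {\<omega>. k \<le> max_load_r n r \<omega>} = 1 - capped_mass n 1 (pmf P) (\<lambda>_. k) r"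
proof -
  have "{\<omega>. k \<le> max_load_r n r \<omega>} = - {\<omega>. \<forall>i\<in>{1..r}. load n \<omega> i < k}"
    using assms by (auto simp: max_load_r_def Max_ge_iff not_less)
  then show ?thesis
    using measure_pmf.prob_compl[of "{\<omega>. \<forall>i\<in>{1..r}. load n \<omega> i < k}" "balls_in_bins n P"]
      prob_loads_below[of n P r "\<lambda>_. k"] by (simp add: Compl_eq_Diff_UNIV)
qed

text \<open>
  Only \<open>k \<ge> 1\<close> and \<open>r \<ge> 1\<close> are needed: the bounds hold for every distribution of the
  balls on \<open>\<nat>\<close>, and \<open>p 1 + ... + p r \<le> 1\<close> holds automatically.
\<close>

theorem mainTheorem10:
  fixes n m k r :: nat and P :: "nat pmf"
  assumes "m \<ge> 2" and "k \<ge> 1" and "1 \<le> r" and "r < m"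
    and "set_pmf P \<subseteq> {1..m}"
    and "(\<Sum>i=1..r. pmf P i) < 1"
  shows "measure_pmf.prob (binomial_pmf n (knorm_r P k r)) {k..}
           \<le> measure_pmf.prob (balls_in_bins n P) {\<omega>. max_load_r n r \<omega> \<ge> k}
         \<and> measure_pmf.prob (balls_in_bins n P) {\<omega>. max_load_r n r \<omega> \<ge> k}
           \<le> real (n choose k) * knorm_r P k r ^ k"
proof
  have "capped_mass n 1 (pmf P) (\<lambda>_. k) r \<le> binomial_lower_tail n 1 k (knorm_r P k r)"
    using capped_mass_le_binomial_lower_tail[of k r "pmf P" 1 n] assms(2) measure_pmf.prob_le_1[of P "{1..r}"]
    by (simp add: knorm_r_eq_root measure_measure_pmf_finite)
  moreover have "0 \<le> knorm_r P k r"
    by (simp add: knorm_r_def)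
  ultimately show "measure_pmf.prob (binomial_pmf n (knorm_r P k r)) {k..}
      \<le> measure_pmf.prob (balls_in_bins n P) {\<omega>. max_load_r n r \<omega> \<ge> k}"
    using assms(2,3) knorm_r_le_1 by (simp add: prob_binomial_pmf_atLeast prob_max_load_r_atLeast)
next
  have "{\<omega>. k \<le> max_load_r n r \<omega>} = (\<Union>i\<in>{1..r}. {\<omega>. k \<le> load n \<omega> i})"
    using assms(3) by (auto simp: max_load_r_def Max_ge_iff)
  then have "measure_pmf.prob (balls_in_bins n P) {\<omega>. k \<le> max_load_r n r \<omega>}
      \<le> (\<Sum>i=1..r. measure_pmf.prob (balls_in_bins n P) {\<omega>. k \<le> load n \<omega> i})"
    by (simp add: measure_pmf.finite_measure_subadditive_finite)
  also have "\<dots> \<le> (\<Sum>i=1..r. real (n choose k) * pmf P i ^ k)"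
    by (intro sum_mono prob_load_ge_le)
  also have "\<dots> = real (n choose k) * knorm_r P k r ^ k"
    using assms(2) by (simp add: knorm_r_eq_root sum_distrib_left sum_nonneg)
  finally show "measure_pmf.prob (balls_in_bins n P) {\<omega>. max_load_r n r \<omega> \<ge> k}
      \<le> real (n choose k) * knorm_r P k r ^ k" .
qed

end
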